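(* Let $d\geq 2$ and $U=(u_{ij})\in\mathcal{U}_d(\mathbb{C})$. If for some permutation matrix $\Pi$ and some $D\in\mathcal{DU}_d(\mathbb{C})$ $$\|U-D\Pi\|_{\mathrm{HS}}^2<2-2\sqrt{\frac{1+\frac{1}{\sqrt d}}{2}},$$ then Alice and Bob are not able to generate a maximally mutually coherent state with just three strokes of the coherence engine, i.e., there are no $l\in\{1,\dots,d\}$ and $D_1,D_2\in\mathcal{DU}_d(\mathbb{C})$ such that $D_2U^\dagger D_1U|l\rangle$ is maximally mutually coherent.
   Context: $\|\cdot\|_{\mathrm{HS}}$ is the Hilbert–Schmidt norm. $\mathcal{U}_d(\mathbb{C})$ denotes the group of $d\times d$ unitary matrices and $\mathcal{DU}_d(\mathbb{C})$ its subgroup of diagonal unitary matrices; $\{|j\rangle\}$ is the computational basis (Alice's basis) and Bob's basis is $\{U^\dagger|j\rangle\}$. Alice's free operations are $\mathcal{DU}_d(\mathbb{C})$, Bob's are $\{U^\dagger DU:D\in\mathcal{DU}_d(\mathbb{C})\}$; a three-stroke protocol: Alice prepares $|l\rangle$, Bob applies $U^\dagger D_1U$, Alice applies $D_2$. A pure state $|\psi\rangle$ is maximally mutually coherent if $|\langle j|\psi\rangle|=|\langle j|U|\psi\rangle|=1/\sqrt d$ for all $j$. *)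

theory Defs
  imports "HOL-Analysis.Analysis"
begin

text \<open>d x d complex matrices are indexed by a finite type 'n with d = CARD('n).\<close>

definition cadj :: "complex^'n^'m \<Rightarrow> complex^'m^'n" where
  "cadj A = (\<chi> i j. cnj (A $ j $ i))"

definition unitary_mat :: "complex^'n^'n \<Rightarrow> bool" where
  "unitary_mat U \<longleftrightarrow> cadj U ** U = mat 1 \<and> U ** cadj U = mat 1"

definition diag_unitary :: "complex^'n^'n \<Rightarrow> bool" where
  "diag_unitary D \<longleftrightarrow> (\<forall>i j. i \<noteq> j \<longrightarrow> D $ i $ j = 0) \<and> (\<forall>i. cmod (D $ i $ i) = 1)"

definition perm_mat :: "('n \<Rightarrow> 'n) \<Rightarrow> complex^'n^'n" where
  "perm_mat p = (\<chi> i j. if i = p j then 1 else 0)"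

definition hs_norm_sq :: "complex^'n^'m \<Rightarrow> real" where
  "hs_norm_sq A = (\<Sum>i\<in>UNIV. \<Sum>j\<in>UNIV. (cmod (A $ i $ j))^2)"

definition ket :: "'n \<Rightarrow> complex^'n" where
  "ket l = axis l 1"

definition max_mut_coherent :: "complex^'n^'n \<Rightarrow> complex^'n \<Rightarrow> bool" where
  "max_mut_coherent U \<psi> \<longleftrightarrow>
     (\<forall>j. cmod (\<psi> $ j) = 1 / sqrt (real CARD('n)) \<and>
          cmod ((U *v \<psi>) $ j) = 1 / sqrt (real CARD('n)))"

end

theory Submission
  imports Defs
begin

(* Let u be the l-th column of U and s = |u (p l)|. The l-th column of D \<Pi> is a unit-modulus
  multiple of the basis vector at p l, so the Hilbert-Schmidt distance is at least
  |u (p l) - \<delta>|\<^sup>2 + (1 - s\<^sup>2) \<ge> 2 - 2 s. On the other hand the l-th amplitude of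
  D2 U\<^sup>\<dagger> D1 U |l> has modulus |\<Sum>k. |u k|\<^sup>2 D1 k k|, a convex combination of unit
  complex numbers with weight s\<^sup>2 at p l, hence at least 2 s\<^sup>2 - 1. Maximal coherence forces
  2 s\<^sup>2 - 1 \<le> 1/\<surd>d, i.e. s \<le> \<surd>((1 + 1/\<surd>d)/2), contradicting the bound on the distance. *)

lemma diag_matrix_vector_mult_nth:
  assumes "\<And>i j. i \<noteq> j \<Longrightarrow> D $ i $ j = 0"
  shows "(D *v v) $ i = D $ i $ i * v $ i"
proof -
  have "(D *v v) $ i = (\<Sum>j\<in>UNIV. D $ i $ j * v $ j)"
    by (simp add: matrix_vector_mult_def)
  also have "\<dots> = (\<Sum>j\<in>UNIV. if j = i then D $ i $ i * v $ i else 0)"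
    using assms by (intro sum.cong) auto
  finally show ?thesis by simp
qed

lemma matrix_vector_mult_ket_nth: "(A *v ket l) $ i = A $ i $ l"
  by (simp add: matrix_vector_mult_def ket_def axis_def if_distrib cong: if_cong)

lemma matrix_mult_perm_mat_nth: "(A ** perm_mat p) $ i $ j = A $ i $ p j"
  by (simp add: matrix_matrix_mult_def perm_mat_def if_distrib cong: if_cong)

lemma unitary_mat_column_norm:
  assumes "unitary_mat U"
  shows "(\<Sum>k\<in>UNIV. (cmod (U $ k $ l))\<^sup>2) = 1"
proof -
  have "(cadj U ** U) $ l $ l = 1"
    using assms by (simp add: unitary_mat_def mat_def)
  then have "(\<Sum>k\<in>UNIV. cnj (U $ k $ l) * U $ k $ l) = 1"
    by (simp add: matrix_matrix_mult_def cadj_def)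
  moreover have "complex_of_real ((cmod (U $ k $ l))\<^sup>2) = cnj (U $ k $ l) * U $ k $ l" for k
    by (metis complex_norm_square mult.commute)
  ultimately have "(\<Sum>k\<in>UNIV. complex_of_real ((cmod (U $ k $ l))\<^sup>2)) = 1"
    by simp
  then show ?thesis
    by (simp only: of_real_sum[symmetric] of_real_eq_1_iff)
qed

lemma hs_norm_sq_ge_column: "(\<Sum>i\<in>UNIV. (cmod (A $ i $ l))\<^sup>2) \<le> hs_norm_sq A"
  unfolding hs_norm_sq_def by (intro sum_mono member_le_sum) auto

lemma sum_norm_diff_unit_peak_ge:
  fixes u :: "'a \<Rightarrow> 'b::real_normed_vector"
  assumes "finite A" "q \<in> A" "(\<Sum>k\<in>A. (norm (u k))\<^sup>2) = 1" "norm \<delta> = 1"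
  shows "2 - 2 * norm (u q) \<le> (\<Sum>k\<in>A. (norm (u k - (if k = q then \<delta> else 0)))\<^sup>2)"
proof -
  have rest: "(\<Sum>k\<in>A-{q}. (norm (u k))\<^sup>2) = 1 - (norm (u q))\<^sup>2"
    using assms(1-3) by (simp add: sum.remove)
  have "1 - norm (u q) \<le> norm (u q - \<delta>)"
    using norm_triangle_ineq2[of \<delta> "u q"] assms(4) by (simp add: norm_minus_commute)
  moreover have "norm (u q) \<le> 1"
    using rest sum_nonneg[of "A-{q}" "\<lambda>k. (norm (u k))\<^sup>2"] by (simp add: power_le_one_iff)
  ultimately have "(1 - norm (u q))\<^sup>2 \<le> (norm (u q - \<delta>))\<^sup>2"
    by (intro power_mono) auto
  moreover have "(\<Sum>k\<in>A-{q}. (norm (u k - (if k = q then \<delta> else 0)))\<^sup>2)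
      = (\<Sum>k\<in>A-{q}. (norm (u k))\<^sup>2)"
    by (intro sum.cong) auto
  then have "(\<Sum>k\<in>A. (norm (u k - (if k = q then \<delta> else 0)))\<^sup>2)
      = (norm (u q - \<delta>))\<^sup>2 + (\<Sum>k\<in>A-{q}. (norm (u k))\<^sup>2)"
    using assms(1,2) by (simp add: sum.remove)
  ultimately show ?thesis
    using rest by (simp add: power2_eq_square algebra_simps)
qed

lemma norm_convex_comb_unit_ge:
  fixes w :: "'a \<Rightarrow> 'b::real_normed_vector"
  assumes "finite A" "q \<in> A" "\<And>k. k \<in> A \<Longrightarrow> 0 \<le> t k" "(\<Sum>k\<in>A. t k) = 1"
    and "\<And>k. k \<in> A \<Longrightarrow> norm (w k) = 1"
  shows "2 * t q - 1 \<le> norm (\<Sum>k\<in>A. t k *\<^sub>R w k)"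
proof -
  have "norm (\<Sum>k\<in>A-{q}. t k *\<^sub>R w k) \<le> (\<Sum>k\<in>A-{q}. norm (t k *\<^sub>R w k))"
    by (rule norm_sum)
  also have "\<dots> = (\<Sum>k\<in>A-{q}. t k)"
    using assms(3,5) by (intro sum.cong) auto
  also have "\<dots> = 1 - t q"
    using assms(1,2,4) by (simp add: sum.remove)
  finally have "norm (t q *\<^sub>R w q) - (1 - t q) \<le> norm (\<Sum>k\<in>A. t k *\<^sub>R w k)"
    using norm_diff_ineq[of "t q *\<^sub>R w q" "\<Sum>k\<in>A-{q}. t k *\<^sub>R w k"] assms(1,2)
    by (simp add: sum.remove)
  then show ?thesis
    using assms by simp
qed

lemma three_stroke_amplitude_at_prepared_index:
  assumes "\<And>i j. i \<noteq> j \<Longrightarrow> D1 $ i $ j = 0" "\<And>i j. i \<noteq> j \<Longrightarrow> D2 $ i $ j = 0"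
  shows "(D2 *v (cadj U *v (D1 *v (U *v ket l)))) $ l
    = D2 $ l $ l * (\<Sum>k\<in>UNIV. (cmod (U $ k $ l))\<^sup>2 *\<^sub>R D1 $ k $ k)"
proof -
  have "(cadj U *v (D1 *v (U *v ket l))) $ l
      = (\<Sum>k\<in>UNIV. cnj (U $ k $ l) * (D1 *v (U *v ket l)) $ k)"
    by (simp add: matrix_vector_mult_def cadj_def)
  also have "\<dots> = (\<Sum>k\<in>UNIV. cnj (U $ k $ l) * (D1 $ k $ k * U $ k $ l))"
    by (simp add: diag_matrix_vector_mult_nth[OF assms(1)] matrix_vector_mult_ket_nth)
  also have "\<dots> = (\<Sum>k\<in>UNIV. (cmod (U $ k $ l))\<^sup>2 *\<^sub>R D1 $ k $ k)"
  proof -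
    have "cnj x * (d * x) = (cmod x)\<^sup>2 *\<^sub>R d" for x d :: complex
      using complex_norm_square[of x] by (simp add: scaleR_conv_of_real mult_ac)
    then show ?thesis
      by (simp only:)
  qed
  finally show ?thesis
    by (simp add: diag_matrix_vector_mult_nth[OF assms(2)])
qed

theorem proposition16:
  fixes U D :: "complex^'n^'n" and p :: "'n \<Rightarrow> 'n"
  assumes "CARD('n) \<ge> 2"
    and "unitary_mat U"
    and "p permutes UNIV"
    and "diag_unitary D"
    and "hs_norm_sq (U - D ** perm_mat p)
           < 2 - 2 * sqrt ((1 + 1 / sqrt (real CARD('n))) / 2)"
  shows "\<not> (\<exists>l D1 D2. diag_unitary D1 \<and> diag_unitary D2 \<and>
            max_mut_coherent U (D2 *v (cadj U *v (D1 *v (U *v ket l)))))"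
proof
  assume "\<exists>l D1 D2. diag_unitary D1 \<and> diag_unitary D2 \<and>
            max_mut_coherent U (D2 *v (cadj U *v (D1 *v (U *v ket l))))"
  then obtain l D1 D2 where D1: "diag_unitary D1" and D2: "diag_unitary D2"
    and coherent: "max_mut_coherent U (D2 *v (cadj U *v (D1 *v (U *v ket l))))"
    by blast
  define s where "s = cmod (U $ p l $ l)"
  have col: "(\<Sum>k\<in>UNIV. (cmod (U $ k $ l))\<^sup>2) = 1"
    using assms(2) by (rule unitary_mat_column_norm)
  have "(D ** perm_mat p) $ k $ l = (if k = p l then D $ p l $ p l else 0)" for k
    using assms(4) by (auto simp: matrix_mult_perm_mat_nth diag_unitary_def)
  then have "2 - 2 * s \<le> (\<Sum>k\<in>UNIV. (cmod ((U - D ** perm_mat p) $ k $ l))\<^sup>2)"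
    using sum_norm_diff_unit_peak_ge[OF _ _ col, of "p l" "D $ p l $ p l"] assms(4)
    by (simp add: s_def diag_unitary_def)
  also have "\<dots> \<le> hs_norm_sq (U - D ** perm_mat p)"
    by (rule hs_norm_sq_ge_column)
  finally have distance: "2 - 2 * s \<le> hs_norm_sq (U - D ** perm_mat p)" .
  have "2 * s\<^sup>2 - 1 \<le> cmod (\<Sum>k\<in>UNIV. (cmod (U $ k $ l))\<^sup>2 *\<^sub>R D1 $ k $ k)"
    using norm_convex_comb_unit_ge[OF _ _ _ col, of "p l" "\<lambda>k. D1 $ k $ k"] D1
    by (simp add: s_def diag_unitary_def)
  also have "\<dots> = cmod ((D2 *v (cadj U *v (D1 *v (U *v ket l)))) $ l)"
    using D1 D2 by (simp add: three_stroke_amplitude_at_prepared_index diag_unitary_def norm_mult)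
  also have "\<dots> = 1 / sqrt (real CARD('n))"
    using coherent by (simp add: max_mut_coherent_def)
  finally have "s\<^sup>2 \<le> (1 + 1 / sqrt (real CARD('n))) / 2"
    by simp
  then have "s \<le> sqrt ((1 + 1 / sqrt (real CARD('n))) / 2)"
    using real_le_rsqrt s_def by simp
  then show False
    using distance assms(5) by simp
qed

end
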